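(* Let $N=\{1,\dots,n\}$, let $\boldsymbol{x}=(x_1,\dots,x_n)\in[0,1]^n$ be a profile of agent locations, let $s\in[0,1]$ be a facility location, and let $k$ be a positive integer with $k\le n$. Then the subgame $\Gamma_{\boldsymbol{x}}(s,k)$ has a (pure-strategy) Nash equilibrium, and in every Nash equilibrium of $\Gamma_{\boldsymbol{x}}(s,k)$ each agent $i\in N$ attains utility $1-|s-x_i|$ if $i\in N_k^*(\boldsymbol{x},s)$, and attains utility $0$ otherwise.
   Context: Distances are $d(a,b)=|a-b|$. Given $\boldsymbol{x}$ and $s$, agents are ordered by a priority relation $\triangleright$: agent $i$ has higher priority than agent $j$ if $|s-x_i|<|s-x_j|$; ties between equidistant agents are broken by a fixed deterministic rule, so $\triangleright$ is a complete strict order. $N_k^*(\boldsymbol{x},s)$ denotes the set of the $k$ highest-priority agents under $\triangleright$ (the "$k$-closest" agents). The subgame $\Gamma_{\boldsymbol{x}}(s,k)$ is the complete-information game in which each agent $i$ simultaneously chooses an action $a_i\in\{\emptyset,s\}$ ($a_i=s$ means travelling to the facility). Let $T=\{i: a_i=s\}$. If $|T|\le k$, all agents in $T$ are served; if $|T|>k$, the $k$ highest-priority agents of $T$ (under $\triangleright$) are served. A served agent $i$ gets utility $1-|s-x_i|$; an agent with $a_i=s$ who is not served gets $-|s-x_i|$; an agent with $a_i=\emptyset$ gets $0$. *)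

theory Defs
  imports Main "HOL.Real"
begin

text \<open>Agents are N = {1..n}; locations x :: nat => real; facility s.
  The priority relation pr i j means "agent i has higher priority than agent j".\<close>

definition agents :: "nat \<Rightarrow> nat set" where
  "agents n = {1..n}"

definition priority_order :: "nat \<Rightarrow> (nat \<Rightarrow> real) \<Rightarrow> real \<Rightarrow> (nat \<Rightarrow> nat \<Rightarrow> bool) \<Rightarrow> bool" where
  "priority_order n x s pr \<longleftrightarrow>
     (\<forall>i\<in>agents n. \<not> pr i i) \<and>
     (\<forall>i\<in>agents n. \<forall>j\<in>agents n. \<forall>l\<in>agents n. pr i j \<longrightarrow> pr j l \<longrightarrow> pr i l) \<and>
     (\<forall>i\<in>agents n. \<forall>j\<in>agents n. i \<noteq> j \<longrightarrow> pr i j \<or> pr j i) \<and>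
     (\<forall>i\<in>agents n. \<forall>j\<in>agents n. \<bar>s - x i\<bar> < \<bar>s - x j\<bar> \<longrightarrow> pr i j)"

definition top_k :: "(nat \<Rightarrow> nat \<Rightarrow> bool) \<Rightarrow> nat \<Rightarrow> nat set \<Rightarrow> nat set" where
  "top_k pr k T = {i \<in> T. card {j \<in> T. pr j i} < k}"

definition k_closest :: "nat \<Rightarrow> (nat \<Rightarrow> nat \<Rightarrow> bool) \<Rightarrow> nat \<Rightarrow> nat set" where
  "k_closest n pr k = top_k pr k (agents n)"

text \<open>Action profiles: a i = True means agent i travels to the facility (a_i = s).\<close>
definition travellers :: "nat \<Rightarrow> (nat \<Rightarrow> bool) \<Rightarrow> nat set" where
  "travellers n a = {i \<in> agents n. a i}"

definition served :: "nat \<Rightarrow> (nat \<Rightarrow> nat \<Rightarrow> bool) \<Rightarrow> nat \<Rightarrow> (nat \<Rightarrow> bool) \<Rightarrow> nat set" where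
  "served n pr k a =
     (if card (travellers n a) \<le> k then travellers n a else top_k pr k (travellers n a))"

definition utility ::
  "nat \<Rightarrow> (nat \<Rightarrow> real) \<Rightarrow> real \<Rightarrow> nat \<Rightarrow> (nat \<Rightarrow> nat \<Rightarrow> bool) \<Rightarrow> (nat \<Rightarrow> bool) \<Rightarrow> nat \<Rightarrow> real" where
  "utility n x s k pr a i =
     (if a i then (if i \<in> served n pr k a then 1 - \<bar>s - x i\<bar> else - \<bar>s - x i\<bar>) else 0)"

definition nash_eq ::
  "nat \<Rightarrow> (nat \<Rightarrow> real) \<Rightarrow> real \<Rightarrow> nat \<Rightarrow> (nat \<Rightarrow> nat \<Rightarrow> bool) \<Rightarrow> (nat \<Rightarrow> bool) \<Rightarrow> bool" where
  "nash_eq n x s k pr a \<longleftrightarrow>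
     (\<forall>i\<in>agents n. \<forall>b. utility n x s k pr (a(i := b)) i \<le> utility n x s k pr a i)"

end

theory Submission
  imports Defs
begin

text \<open>Let \<open>K\<close> be the \<open>k\<close> closest agents. Every member of \<open>K\<close> is served whenever
  she travels, because no competitor outranks her; so in equilibrium she earns
  \<open>1 - |s - x\<^sub>i|\<close>, and if she stays home this forces \<open>|s - x\<^sub>i| = 1\<close>. An outsider who
  travels is served only if some member of \<open>K\<close> stays home; that member is at distance 1,
  hence so is the outsider (she is outranked, so not strictly closer), and her payoff
  is again 0; an unserved traveller must be at distance 0. Conversely, letting exactly \<open>K\<close> travel is an equilibrium.\<close>

lemma top_k_subset: "top_k pr k T \<subseteq> T"
  unfolding top_k_def by blast

lemma top_k_restrict:
  assumes "finite B" "T \<subseteq> B" "i \<in> T" "i \<in> top_k pr k B"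
  shows "i \<in> top_k pr k T"
proof -
  have "card {j \<in> T. pr j i} \<le> card {j \<in> B. pr j i}"
    using assms(1,2) by (intro card_mono) auto
  then show ?thesis
    using assms(3,4) unfolding top_k_def by simp
qed

lemma not_in_top_k:
  assumes "finite T" "S \<subseteq> {j \<in> T. pr j i}" "k \<le> card S"
  shows "i \<notin> top_k pr k T"
proof -
  have "card S \<le> card {j \<in> T. pr j i}"
    using assms(1,2) by (intro card_mono) auto
  then show ?thesis
    using assms(3) unfolding top_k_def by simp
qed

locale strict_total_order_on =
  fixes A :: "nat set" and pr :: "nat \<Rightarrow> nat \<Rightarrow> bool"
  assumes finite_carrier: "finite A"
    and pr_irrefl: "i \<in> A \<Longrightarrow> \<not> pr i i"
    and pr_trans: "i \<in> A \<Longrightarrow> j \<in> A \<Longrightarrow> l \<in> A \<Longrightarrow> pr i j \<Longrightarrow> pr j l \<Longrightarrow> pr i l"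
    and pr_total: "i \<in> A \<Longrightarrow> j \<in> A \<Longrightarrow> i \<noteq> j \<Longrightarrow> pr i j \<or> pr j i"
begin

lemma pr_asym: "i \<in> A \<Longrightarrow> j \<in> A \<Longrightarrow> pr i j \<Longrightarrow> \<not> pr j i"
  using pr_irrefl pr_trans by blast

lemma card_predecessors_strict_mono:
  assumes "T \<subseteq> A" "i \<in> T" "j \<in> T" "pr i j"
  shows "card {l \<in> T. pr l i} < card {l \<in> T. pr l j}"
proof (rule psubset_card_mono)
  show "finite {l \<in> T. pr l j}"
    using finite_subset[OF assms(1) finite_carrier] by simp
  have "{l \<in> T. pr l i} \<subseteq> {l \<in> T. pr l j}"
    using assms pr_trans by blast
  moreover have "i \<in> {l \<in> T. pr l j} - {l \<in> T. pr l i}"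
    using assms pr_irrefl by blast
  ultimately show "{l \<in> T. pr l i} \<subset> {l \<in> T. pr l j}"
    by blast
qed

lemma top_k_above:
  assumes "T \<subseteq> A" "j \<in> top_k pr k T" "i \<in> T" "i \<notin> top_k pr k T"
  shows "pr j i"
proof (rule ccontr)
  assume "\<not> pr j i"
  moreover have "j \<in> T" "i \<noteq> j"
    using assms(2,4) top_k_subset by blast+
  ultimately have "pr i j"
    using assms(1,3) pr_total by blast
  with assms(1-3) \<open>j \<in> T\<close> have "i \<in> top_k pr k T"
    using card_predecessors_strict_mono[of T i j] unfolding top_k_def by simp
  with assms(4) show False ..
qed

lemma card_top_k:
  assumes "T \<subseteq> A"
  shows "card (top_k pr k T) = min k (card T)"
proof -
  define rank where "rank i = card {l \<in> T. pr l i}" for i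
  have fin: "finite T"
    using assms finite_carrier finite_subset by blast
  have inj: "inj_on rank T"
  proof (rule inj_onI, rule ccontr)
    fix i j assume "i \<in> T" "j \<in> T" "rank i = rank j" "i \<noteq> j"
    then show False
      using pr_total[of i j] assms card_predecessors_strict_mono[of T i j]
        card_predecessors_strict_mono[of T j i] unfolding rank_def by auto
  qed
  have "rank i < card T" if "i \<in> T" for i
  proof -
    have "rank i \<le> card (T - {i})"
      unfolding rank_def using fin that assms pr_irrefl by (intro card_mono) auto
    also have "\<dots> < card T"
      using fin that by (rule card_Diff1_less)
    finally show ?thesis .
  qed
  then have "rank ` T \<subseteq> {..<card T}"
    by blast
  then have ranks: "rank ` T = {..<card T}"
    using card_subset_eq[of "{..<card T}" "rank ` T"] card_image[OF inj] by simp
  have "top_k pr k T = {i \<in> T. rank i < k}"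
    unfolding top_k_def rank_def ..
  then have "rank ` top_k pr k T = {m \<in> rank ` T. m < k}"
    by blast
  then have "rank ` top_k pr k T = {..<min k (card T)}"
    unfolding ranks by auto
  moreover have "inj_on rank (top_k pr k T)"
    using inj top_k_subset by (rule inj_on_subset)
  ultimately show ?thesis
    by (metis card_image card_lessThan)
qed

end

lemma finite_agents: "finite (agents n)"
  unfolding agents_def by simp

lemma card_agents: "card (agents n) = n"
  unfolding agents_def by simp

lemma priority_order_strict_total:
  "priority_order n x s pr \<Longrightarrow> strict_total_order_on (agents n) pr"
  unfolding priority_order_def strict_total_order_on_def using finite_agents by blast

lemma priority_order_closer:
  "priority_order n x s pr \<Longrightarrow> i \<in> agents n \<Longrightarrow> j \<in> agents n \<Longrightarrow>
    \<bar>s - x i\<bar> < \<bar>s - x j\<bar> \<Longrightarrow> pr i j"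
  unfolding priority_order_def by blast

lemma k_closest_subset: "k_closest n pr k \<subseteq> agents n"
  unfolding k_closest_def by (rule top_k_subset)

lemma card_k_closest:
  "priority_order n x s pr \<Longrightarrow> k \<le> n \<Longrightarrow> card (k_closest n pr k) = k"
  using strict_total_order_on.card_top_k[OF priority_order_strict_total, of n x s pr "agents n" k]
  unfolding k_closest_def card_agents by simp

lemma travellers_subset: "travellers n a \<subseteq> agents n"
  unfolding travellers_def by blast

lemma top_k_travellers_served: "top_k pr k (travellers n a) \<subseteq> served n pr k a"
  unfolding served_def using top_k_subset[of pr k "travellers n a"] by simp

lemma k_closest_served:
  assumes "i \<in> k_closest n pr k" "a i"
  shows "i \<in> served n pr k a"
proof -
  have "i \<in> travellers n a"
    using assms k_closest_subset unfolding travellers_def by blast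
  with assms(1) have "i \<in> top_k pr k (travellers n a)"
    unfolding k_closest_def by (rule top_k_restrict[OF finite_agents travellers_subset, rotated])
  then show ?thesis
    using top_k_travellers_served ..
qed

lemma outsider_not_served:
  assumes po: "priority_order n x s pr" and "k \<le> n"
    and K_travel: "k_closest n pr k \<subseteq> travellers n a"
    and i: "i \<in> travellers n a" "i \<notin> k_closest n pr k"
  shows "i \<notin> served n pr k a"
proof -
  let ?K = "k_closest n pr k" and ?T = "travellers n a"
  interpret strict_total_order_on "agents n" pr
    using po by (rule priority_order_strict_total)
  have fin: "finite ?T"
    using travellers_subset finite_carrier finite_subset by blast
  have card_K: "card ?K = k"
    using po \<open>k \<le> n\<close> by (rule card_k_closest)
  have K_above: "?K \<subseteq> {j \<in> ?T. pr j i}"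
    using K_travel i travellers_subset top_k_above[of "agents n" _ k i]
    unfolding k_closest_def by blast
  show ?thesis
  proof (cases "card ?T \<le> k")
    case True
    have "card (insert i ?K) \<le> card ?T"
      using fin K_travel i by (intro card_mono) auto
    moreover have "card (insert i ?K) = Suc k"
      using i card_K finite_subset[OF k_closest_subset finite_carrier] by simp
    ultimately show ?thesis
      using True by simp
  next
    case False
    then show ?thesis
      using not_in_top_k[of _ _ pr i, OF fin K_above] card_K unfolding served_def by simp
  qed
qed

lemma nash_eq_deviation:
  "nash_eq n x s k pr a \<Longrightarrow> i \<in> agents n \<Longrightarrow>
    utility n x s k pr (a(i := b)) i \<le> utility n x s k pr a i"
  unfolding nash_eq_def by blast

lemma nash_eq_k_closest:
  assumes po: "priority_order n x s pr" and "k \<le> n"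
    and dist: "\<forall>i\<in>agents n. \<bar>s - x i\<bar> \<le> 1"
  shows "nash_eq n x s k pr (\<lambda>i. i \<in> k_closest n pr k)"
  unfolding nash_eq_def
proof (intro ballI allI)
  let ?K = "k_closest n pr k" and ?a = "\<lambda>i. i \<in> k_closest n pr k"
  fix i b assume i: "i \<in> agents n"
  show "utility n x s k pr (?a(i := b)) i \<le> utility n x s k pr ?a i"
  proof (cases "b = ?a i")
    case True
    then have "?a(i := b) = ?a"
      by auto
    then show ?thesis by simp
  next
    case change: False
    show ?thesis
    proof (cases "i \<in> ?K")
      case True
      then show ?thesis
        using change i dist k_closest_served[OF True, of ?a] unfolding utility_def by auto
    next
      case outside: False
      have "travellers n (?a(i := b)) = insert i ?K"
        using change outside i k_closest_subset unfolding travellers_def by auto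
      then have "i \<notin> served n pr k (?a(i := b))"
        using outsider_not_served[OF po \<open>k \<le> n\<close>] outside by blast
      then show ?thesis
        using outside change unfolding utility_def by auto
    qed
  qed
qed

lemma nash_eq_absent_closest:
  assumes "nash_eq n x s k pr a" "j \<in> k_closest n pr k" "\<not> a j"
  shows "1 \<le> \<bar>s - x j\<bar>"
proof -
  have "j \<in> served n pr k (a(j := True))"
    using assms(2) by (rule k_closest_served) simp
  then show ?thesis
    using nash_eq_deviation[OF assms(1), of j True] assms(2,3) k_closest_subset
    unfolding utility_def by auto
qed

lemma nash_eq_utility_closest:
  assumes "nash_eq n x s k pr a" "j \<in> k_closest n pr k" "\<bar>s - x j\<bar> \<le> 1"
  shows "utility n x s k pr a j = 1 - \<bar>s - x j\<bar>"
  using assms k_closest_served[OF assms(2), of a] nash_eq_absent_closest[OF assms(1,2)]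
  unfolding utility_def by auto

lemma nash_eq_utility_outsider:
  assumes po: "priority_order n x s pr" and "k \<le> n"
    and ne: "nash_eq n x s k pr a"
    and i: "i \<in> agents n" "i \<notin> k_closest n pr k" and dist_i: "\<bar>s - x i\<bar> \<le> 1"
  shows "utility n x s k pr a i = 0"
proof (cases "a i \<and> i \<in> served n pr k a")
  case False
  then show ?thesis
    using nash_eq_deviation[OF ne i(1), of False] unfolding utility_def by auto
next
  case True
  interpret strict_total_order_on "agents n" pr
    using po by (rule priority_order_strict_total)
  have "i \<in> travellers n a"
    using True i unfolding travellers_def by blast
  then have "\<not> k_closest n pr k \<subseteq> travellers n a"
    using outsider_not_served[OF po \<open>k \<le> n\<close>] True i by blast
  then obtain j where j: "j \<in> k_closest n pr k" "\<not> a j"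
    using k_closest_subset unfolding travellers_def by blast
  have "j \<in> agents n"
    using j k_closest_subset by blast
  have "pr j i"
    using j i top_k_above[of "agents n" j k i] unfolding k_closest_def by blast
  then have "\<not> \<bar>s - x i\<bar> < \<bar>s - x j\<bar>"
    using pr_asym priority_order_closer[OF po] i \<open>j \<in> agents n\<close> by blast
  then have "\<bar>s - x i\<bar> = 1"
    using nash_eq_absent_closest[OF ne j] dist_i by simp
  then show ?thesis
    using True i unfolding utility_def by simp
qed

theorem proposition3p1:
  fixes n k :: nat and x :: "nat \<Rightarrow> real" and s :: real and pr :: "nat \<Rightarrow> nat \<Rightarrow> bool"
  assumes "1 \<le> k" and "k \<le> n"
    and "\<forall>i\<in>agents n. 0 \<le> x i \<and> x i \<le> 1"
    and "0 \<le> s" and "s \<le> 1"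
    and "priority_order n x s pr"
  shows "(\<exists>a. nash_eq n x s k pr a) \<and>
         (\<forall>a. nash_eq n x s k pr a \<longrightarrow>
            (\<forall>i\<in>agents n. utility n x s k pr a i =
               (if i \<in> k_closest n pr k then 1 - \<bar>s - x i\<bar> else 0)))"
proof -
  have dist: "\<forall>i\<in>agents n. \<bar>s - x i\<bar> \<le> 1"
    using assms(3-5) by auto
  have "nash_eq n x s k pr (\<lambda>i. i \<in> k_closest n pr k)"
    using assms(6,2) dist by (rule nash_eq_k_closest)
  moreover have "utility n x s k pr a i =
      (if i \<in> k_closest n pr k then 1 - \<bar>s - x i\<bar> else 0)"
    if "nash_eq n x s k pr a" "i \<in> agents n" for a i
    using that dist nash_eq_utility_closest nash_eq_utility_outsider[OF assms(6,2)] by auto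
  ultimately show ?thesis
    by blast
qed

end
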